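(* Let $K$ be a field with $\operatorname{char}(K)\neq2$ and let $(M,N,(\cdot_1,\cdot_2),\partial,(\{-,-\},\langle-,-\rangle))$ be a braided crossed module of Leibniz $K$-algebras. Then $(M\rtimes N,N,\bar s,\bar t,\bar e,\bar k,(\bar\tau,\bar\psi))$ is a braided categorical Leibniz $K$-algebra, where $\bar s(m,n)=n$, $\bar t(m,n)=\partial m+n$, $\bar e(n)=(0,n)$, $\bar k\colon (M\rtimes N)\times_N(M\rtimes N)\to M\rtimes N$ (pullback of $\bar t$ and $\bar s$) is $\bar k((m,n),(m',\partial m+n))=(m+m',n)$, $\bar\tau_{n,n'}=(-2\{n,n'\},[n,n'])$ and $\bar\psi_{n,n'}=(-2\langle n,n'\rangle,[n,n'])$.
   Context: A Leibniz $K$-algebra is a $K$-vector space with a bilinear bracket satisfying $[x,[y,z]]=[[x,y],z]-[[x,z],y]$. A Leibniz action of $N$ on $M$ is a pair of bilinear maps $\cdot_1\colon N\times M\to M$, $\cdot_2\colon M\times N\to M$ with: $n\cdot_1[m,m']=[n\cdot_1m,m']-[n\cdot_1m',m]$; $[m,n\cdot_1m']=[m\cdot_2n,m']-[m,m']\cdot_2n$; $[m,m'\cdot_2n]=[m,m']\cdot_2n-[m\cdot_2n,m']$; $m\cdot_2[n,n']=(m\cdot_2n)\cdot_2n'-(m\cdot_2n')\cdot_2n$; $n\cdot_1(m\cdot_2n')=(n\cdot_1m)\cdot_2n'-[n,n']\cdot_1m$; $n\cdot_1(n'\cdot_1m)=[n,n']\cdot_1m-(n\cdot_1m)\cdot_2n'$.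 The semidirect product $M\rtimes N$ is $M\times N$ with $[(m,n),(m',n')]=([m,m']+n\cdot_1m'+m\cdot_2n',[n,n'])$. A crossed module $(M,N,(\cdot_1,\cdot_2),\partial)$: such an action and a Leibniz homomorphism $\partial\colon M\to N$ with $\partial(n\cdot_1m)=[n,\partial m]$, $\partial(m\cdot_2n)=[\partial m,n]$, $\partial(m)\cdot_1m'=[m,m']=m\cdot_2\partial(m')$. A braiding is a pair of bilinear maps $\{-,-\},\langle-,-\rangle\colon N\times N\to M$ with, for all $m,m'\in M$, $n,n',n''\in N$: $\partial\{n,n'\}=[n,n']=\partial\langle n,n'\rangle$; $\{\partial m,\partial m'\}=[m,m']=\langle\partial m,\partial m'\rangle$; $\{\partial m,n\}=m\cdot_2n=\langle\partial m,n\rangle$; $\{n,\partial m\}=n\cdot_1m=\langle n,\partial m\rangle$; $\{n,[n',n'']\}=\{[n,n'],n''\}-\{[n,n''],n'\}$; $\langle n,[n',n'']\rangle=\{[n,n'],n''\}-\langle[n,n''],n'\rangle$; $\{n,[n',n'']\}=\{[n,n'],n''\}-\langle[n,n''],n'\rangle$; $\langle n,[n',n'']\rangle=\langle[n,n'],n''\rangle-\langle[n,n''],n'\rangle$. A categorical Leibniz algebra $(C_1,C_0,s,t,e,k)$ is an internal category in Leibniz algebras: Leibniz homomorphisms $s,t\colon C_1\to C_0$, $e\colon C_0\to C_1$, $k\colon C_1\times_{C_0}C_1=\{(x,y):t(x)=s(y)\}\to C_1$ with $se=te=\mathrm{Id}$, $s(k(x,y))=s(x)$, $t(k(x,y))=t(y)$,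 $k(e(s(x)),x)=x=k(x,e(t(x)))$, $k$ associative. A braiding on it is a pair of bilinear maps $\tau,\psi\colon C_0\times C_0\to C_1$ with, for all $a,b,c\in C_0$, $x,y\in C_1$: $s(\tau_{a,b})=s(\psi_{a,b})=[a,b]$, $t(\tau_{a,b})=t(\psi_{a,b})=-[a,b]$; $k([x,y],\tau_{t(x),t(y)})=k(\tau_{s(x),s(y)},-[x,y])$ and likewise for $\psi$; $\tau_{a,[b,c]}=\tau_{[a,b],c}-\tau_{[a,c],b}$; $\psi_{a,[b,c]}=\tau_{[a,b],c}-\psi_{[a,c],b}$; $\tau_{a,[b,c]}=\tau_{[a,b],c}-\psi_{[a,c],b}$; $\psi_{a,[b,c]}=\psi_{[a,b],c}-\psi_{[a,c],b}$. *)

theory Defs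
  imports Complex_Main "HOL-Library.Product_Plus"
begin

definition bilin ::
  "('k::field \<Rightarrow> 'a::ab_group_add \<Rightarrow> 'a) \<Rightarrow> ('k \<Rightarrow> 'b::ab_group_add \<Rightarrow> 'b) \<Rightarrow>
   ('k \<Rightarrow> 'c::ab_group_add \<Rightarrow> 'c) \<Rightarrow> ('a \<Rightarrow> 'b \<Rightarrow> 'c) \<Rightarrow> bool" where
  "bilin sa sb sc f \<longleftrightarrow>
     (\<forall>x. Vector_Spaces.linear sb sc (f x)) \<and> (\<forall>y. Vector_Spaces.linear sa sc (\<lambda>x. f x y))"

definition leibniz_algebra ::
  "('k::field \<Rightarrow> 'a::ab_group_add \<Rightarrow> 'a) \<Rightarrow> ('a \<Rightarrow> 'a \<Rightarrow> 'a) \<Rightarrow> bool" where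
  "leibniz_algebra sa br \<longleftrightarrow> vector_space sa \<and> bilin sa sa sa br \<and>
     (\<forall>x y z. br x (br y z) = br (br x y) z - br (br x z) y)"

definition leibniz_hom ::
  "('k::field \<Rightarrow> 'a::ab_group_add \<Rightarrow> 'a) \<Rightarrow> ('a \<Rightarrow> 'a \<Rightarrow> 'a) \<Rightarrow>
   ('k \<Rightarrow> 'b::ab_group_add \<Rightarrow> 'b) \<Rightarrow> ('b \<Rightarrow> 'b \<Rightarrow> 'b) \<Rightarrow> ('a \<Rightarrow> 'b) \<Rightarrow> bool" where
  "leibniz_hom sa bra sb brb f \<longleftrightarrow> Vector_Spaces.linear sa sb f \<and>
     (\<forall>x y. f (bra x y) = brb (f x) (f y))"

definition leibniz_action ::
  "('k::field \<Rightarrow> 'm::ab_group_add \<Rightarrow> 'm) \<Rightarrow> ('m \<Rightarrow> 'm \<Rightarrow> 'm) \<Rightarrow>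
   ('k \<Rightarrow> 'n::ab_group_add \<Rightarrow> 'n) \<Rightarrow> ('n \<Rightarrow> 'n \<Rightarrow> 'n) \<Rightarrow>
   ('n \<Rightarrow> 'm \<Rightarrow> 'm) \<Rightarrow> ('m \<Rightarrow> 'n \<Rightarrow> 'm) \<Rightarrow> bool" where
  "leibniz_action sM brM sN brN a1 a2 \<longleftrightarrow>
     bilin sN sM sM a1 \<and> bilin sM sN sM a2 \<and>
     (\<forall>n m m'. a1 n (brM m m') = brM (a1 n m) m' - brM (a1 n m') m) \<and>
     (\<forall>m n m'. brM m (a1 n m') = brM (a2 m n) m' - a2 (brM m m') n) \<and>
     (\<forall>m m' n. brM m (a2 m' n) = a2 (brM m m') n - brM (a2 m n) m') \<and>
     (\<forall>m n n'. a2 m (brN n n') = a2 (a2 m n) n' - a2 (a2 m n') n) \<and>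
     (\<forall>n m n'. a1 n (a2 m n') = a2 (a1 n m) n' - a1 (brN n n') m) \<and>
     (\<forall>n n' m. a1 n (a1 n' m) = a1 (brN n n') m - a2 (a1 n m) n')"

definition crossed_module ::
  "('k::field \<Rightarrow> 'm::ab_group_add \<Rightarrow> 'm) \<Rightarrow> ('m \<Rightarrow> 'm \<Rightarrow> 'm) \<Rightarrow>
   ('k \<Rightarrow> 'n::ab_group_add \<Rightarrow> 'n) \<Rightarrow> ('n \<Rightarrow> 'n \<Rightarrow> 'n) \<Rightarrow>
   ('n \<Rightarrow> 'm \<Rightarrow> 'm) \<Rightarrow> ('m \<Rightarrow> 'n \<Rightarrow> 'm) \<Rightarrow> ('m \<Rightarrow> 'n) \<Rightarrow> bool" where
  "crossed_module sM brM sN brN a1 a2 d \<longleftrightarrow>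
     leibniz_algebra sM brM \<and> leibniz_algebra sN brN \<and>
     leibniz_action sM brM sN brN a1 a2 \<and> leibniz_hom sM brM sN brN d \<and>
     (\<forall>n m. d (a1 n m) = brN n (d m)) \<and>
     (\<forall>m n. d (a2 m n) = brN (d m) n) \<and>
     (\<forall>m m'. a1 (d m) m' = brM m m' \<and> brM m m' = a2 m (d m'))"

definition braiding ::
  "('k::field \<Rightarrow> 'm::ab_group_add \<Rightarrow> 'm) \<Rightarrow> ('m \<Rightarrow> 'm \<Rightarrow> 'm) \<Rightarrow>
   ('k \<Rightarrow> 'n::ab_group_add \<Rightarrow> 'n) \<Rightarrow> ('n \<Rightarrow> 'n \<Rightarrow> 'n) \<Rightarrow>
   ('n \<Rightarrow> 'm \<Rightarrow> 'm) \<Rightarrow> ('m \<Rightarrow> 'n \<Rightarrow> 'm) \<Rightarrow> ('m \<Rightarrow> 'n) \<Rightarrow>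
   ('n \<Rightarrow> 'n \<Rightarrow> 'm) \<Rightarrow> ('n \<Rightarrow> 'n \<Rightarrow> 'm) \<Rightarrow> bool" where
  "braiding sM brM sN brN a1 a2 d B A \<longleftrightarrow>
     bilin sN sN sM B \<and> bilin sN sN sM A \<and>
     (\<forall>n n'. d (B n n') = brN n n' \<and> d (A n n') = brN n n') \<and>
     (\<forall>m m'. B (d m) (d m') = brM m m' \<and> A (d m) (d m') = brM m m') \<and>
     (\<forall>m n. B (d m) n = a2 m n \<and> A (d m) n = a2 m n) \<and>
     (\<forall>n m. B n (d m) = a1 n m \<and> A n (d m) = a1 n m) \<and>
     (\<forall>n n' n''. B n (brN n' n'') = B (brN n n') n'' - B (brN n n'') n') \<and>
     (\<forall>n n' n''. A n (brN n' n'') = B (brN n n') n'' - A (brN n n'') n') \<and>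
     (\<forall>n n' n''. B n (brN n' n'') = B (brN n n') n'' - A (brN n n'') n') \<and>
     (\<forall>n n' n''. A n (brN n' n'') = A (brN n n') n'' - A (brN n n'') n')"

definition braided_crossed_module where
  "braided_crossed_module sM brM sN brN a1 a2 d B A \<longleftrightarrow>
     crossed_module sM brM sN brN a1 a2 d \<and> braiding sM brM sN brN a1 a2 d B A"

definition sd_scale :: "('k \<Rightarrow> 'm \<Rightarrow> 'm) \<Rightarrow> ('k \<Rightarrow> 'n \<Rightarrow> 'n) \<Rightarrow> 'k \<Rightarrow> 'm \<times> 'n \<Rightarrow> 'm \<times> 'n" where
  "sd_scale sM sN c x = (sM c (fst x), sN c (snd x))"

definition sd_bracket ::
  "('m::plus \<Rightarrow> 'm \<Rightarrow> 'm) \<Rightarrow> ('n \<Rightarrow> 'n \<Rightarrow> 'n) \<Rightarrow> ('n \<Rightarrow> 'm \<Rightarrow> 'm) \<Rightarrow> ('m \<Rightarrow> 'n \<Rightarrow> 'm) \<Rightarrow>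
   'm \<times> 'n \<Rightarrow> 'm \<times> 'n \<Rightarrow> 'm \<times> 'n" where
  "sd_bracket brM brN a1 a2 x y =
     (brM (fst x) (fst y) + a1 (snd x) (fst y) + a2 (fst x) (snd y), brN (snd x) (snd y))"

text \<open>The pullback C1 \<times>_{C0} C1 = {(x,y). t x = s y}, a subalgebra of C1 \<times> C1 with
  componentwise operations; k is required to be a Leibniz homomorphism on it.\<close>

definition cat_leibniz ::
  "('k::field \<Rightarrow> 'c1::ab_group_add \<Rightarrow> 'c1) \<Rightarrow> ('c1 \<Rightarrow> 'c1 \<Rightarrow> 'c1) \<Rightarrow>
   ('k \<Rightarrow> 'c0::ab_group_add \<Rightarrow> 'c0) \<Rightarrow> ('c0 \<Rightarrow> 'c0 \<Rightarrow> 'c0) \<Rightarrow>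
   ('c1 \<Rightarrow> 'c0) \<Rightarrow> ('c1 \<Rightarrow> 'c0) \<Rightarrow> ('c0 \<Rightarrow> 'c1) \<Rightarrow> ('c1 \<times> 'c1 \<Rightarrow> 'c1) \<Rightarrow> bool" where
  "cat_leibniz s1 br1 s0 br0 s t e k \<longleftrightarrow>
     leibniz_algebra s1 br1 \<and> leibniz_algebra s0 br0 \<and>
     leibniz_hom s1 br1 s0 br0 s \<and> leibniz_hom s1 br1 s0 br0 t \<and>
     leibniz_hom s0 br0 s1 br1 e \<and>
     \<comment> \<open>k is a Leibniz homomorphism on the pullback\<close>
     (\<forall>x y x' y'. t x = s y \<longrightarrow> t x' = s y' \<longrightarrow>
        k (x + x', y + y') = k (x, y) + k (x', y') \<and>
        k (br1 x x', br1 y y') = br1 (k (x, y)) (k (x', y'))) \<and>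
     (\<forall>c x y. t x = s y \<longrightarrow> k (s1 c x, s1 c y) = s1 c (k (x, y))) \<and>
     (\<forall>a. s (e a) = a \<and> t (e a) = a) \<and>
     (\<forall>x y. t x = s y \<longrightarrow> s (k (x, y)) = s x \<and> t (k (x, y)) = t y) \<and>
     (\<forall>x. k (e (s x), x) = x \<and> k (x, e (t x)) = x) \<and>
     (\<forall>x y z. t x = s y \<longrightarrow> t y = s z \<longrightarrow> k (k (x, y), z) = k (x, k (y, z)))"

definition braided_cat_leibniz ::
  "('k::field \<Rightarrow> 'c1::ab_group_add \<Rightarrow> 'c1) \<Rightarrow> ('c1 \<Rightarrow> 'c1 \<Rightarrow> 'c1) \<Rightarrow>
   ('k \<Rightarrow> 'c0::ab_group_add \<Rightarrow> 'c0) \<Rightarrow> ('c0 \<Rightarrow> 'c0 \<Rightarrow> 'c0) \<Rightarrow>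
   ('c1 \<Rightarrow> 'c0) \<Rightarrow> ('c1 \<Rightarrow> 'c0) \<Rightarrow> ('c0 \<Rightarrow> 'c1) \<Rightarrow> ('c1 \<times> 'c1 \<Rightarrow> 'c1) \<Rightarrow>
   ('c0 \<Rightarrow> 'c0 \<Rightarrow> 'c1) \<Rightarrow> ('c0 \<Rightarrow> 'c0 \<Rightarrow> 'c1) \<Rightarrow> bool" where
  "braided_cat_leibniz s1 br1 s0 br0 s t e k \<tau> \<psi> \<longleftrightarrow>
     cat_leibniz s1 br1 s0 br0 s t e k \<and>
     bilin s0 s0 s1 \<tau> \<and> bilin s0 s0 s1 \<psi> \<and>
     (\<forall>a b. s (\<tau> a b) = br0 a b \<and> s (\<psi> a b) = br0 a b \<and>
            t (\<tau> a b) = - br0 a b \<and> t (\<psi> a b) = - br0 a b) \<and>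
     (\<forall>x y. k (br1 x y, \<tau> (t x) (t y)) = k (\<tau> (s x) (s y), - br1 x y) \<and>
            k (br1 x y, \<psi> (t x) (t y)) = k (\<psi> (s x) (s y), - br1 x y)) \<and>
     (\<forall>a b c. \<tau> a (br0 b c) = \<tau> (br0 a b) c - \<tau> (br0 a c) b) \<and>
     (\<forall>a b c. \<psi> a (br0 b c) = \<tau> (br0 a b) c - \<psi> (br0 a c) b) \<and>
     (\<forall>a b c. \<tau> a (br0 b c) = \<tau> (br0 a b) c - \<psi> (br0 a c) b) \<and>
     (\<forall>a b c. \<psi> a (br0 b c) = \<psi> (br0 a b) c - \<psi> (br0 a c) b)"

end

theory Submission
  imports Defs
begin

text \<open>The semidirect product \<open>M \<rtimes> N\<close> with source \<open>(m, n) \<mapsto> n\<close> and target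
  \<open>(m, n) \<mapsto> \<partial>m + n\<close> is the categorical Leibniz algebra of the crossed module; composition
  adds the \<open>M\<close>-components, and it is multiplicative because \<open>\<partial>m \<cdot>\<^sub>1 m' = [m, m'] = m \<cdot>\<^sub>2 \<partial>m'\<close>.
  For the braiding, bilinearity and the four hexagon identities hold componentwise: in \<open>M\<close> they
  are the braiding axioms, in \<open>N\<close> the Leibniz identity. Expanding \<open>{\<partial>m + n, \<partial>m' + n'}\<close> with the
  braiding axioms gives the interchange identity \<open>fst [x, y] = {t x, t y} - {s x, s y}\<close> in
  \<open>M \<rtimes> N\<close>, which turns the naturality condition on \<open>\<tau>\<close> and \<open>\<psi>\<close> into an identity where the
  factors \<open>-2\<close> cancel. That factor is forced by \<open>t \<tau>\<^sub>a\<^sub>,\<^sub>b = \<partial>(-2{a, b}) + [a, b] = -[a, b]\<close>.\<close>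

lemma linear_simps:
  assumes "Vector_Spaces.linear s1 s2 f"
  shows "f (x + y) = f x + f y" "f (s1 c x) = s2 c (f x)" "f 0 = 0" "f (- x) = - f x"
    "f (x - y) = f x - f y"
proof -
  interpret Vector_Spaces.linear s1 s2 f by fact
  show "f (x + y) = f x + f y" "f (s1 c x) = s2 c (f x)" "f 0 = 0" "f (- x) = - f x"
    "f (x - y) = f x - f y" by (simp_all add: add scale neg diff)
qed

lemma bilin_simps:
  assumes "bilin sa sb sc f"
  shows "f x (y + z) = f x y + f x z" "f (u + v) w = f u w + f v w"
    "f x (sb c y) = sc c (f x y)" "f (sa c u) w = sc c (f u w)"
    "f x 0 = 0" "f 0 w = 0" "f x (- y) = - f x y" "f (- u) w = - f u w"
    "f x (y - z) = f x y - f x z" "f (u - v) w = f u w - f v w"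
  using linear_simps[of sb sc "f x"] linear_simps[of sa sc "\<lambda>x. f x w"] assms
  unfolding bilin_def by auto

lemma bilinI:
  assumes "vector_space sa" "vector_space sb" "vector_space sc"
    and "\<And>x y z. f x (y + z) = f x y + f x z" "\<And>x y z. f (x + y) z = f x z + f y z"
    and "\<And>c x y. f x (sb c y) = sc c (f x y)" "\<And>c x y. f (sa c x) y = sc c (f x y)"
  shows "bilin sa sb sc f"
  using assms unfolding bilin_def Vector_Spaces.linear_iff by auto

lemma vector_space_scale_minus_two:
  assumes "vector_space s"
  shows "s (-2) x = - (x + x)"
proof -
  interpret vector_space s by fact
  have "s (1 + 1) x = x + x" by (simp only: scale_left_distrib scale_one)
  then show ?thesis by simp
qed

lemma vector_space_sd_scale:
  assumes "vector_space sM" "vector_space sN"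
  shows "vector_space (sd_scale sM sN)"
proof -
  interpret M: vector_space sM by fact
  interpret N: vector_space sN by fact
  show ?thesis
    unfolding vector_space_def sd_scale_def
    by (simp add: M.scale_right_distrib M.scale_left_distrib N.scale_right_distrib
        N.scale_left_distrib)
qed

lemma bilin_sd_bracket:
  assumes "vector_space sM" "vector_space sN"
    and "bilin sM sM sM brM" "bilin sN sN sN brN" "bilin sN sM sM a1" "bilin sM sN sM a2"
  shows "bilin (sd_scale sM sN) (sd_scale sM sN) (sd_scale sM sN) (sd_bracket brM brN a1 a2)"
proof -
  interpret M: vector_space sM by fact
  show ?thesis
    using assms
    by (intro bilinI vector_space_sd_scale)
      (simp_all add: sd_bracket_def sd_scale_def bilin_simps M.scale_right_distrib)
qed

lemma leibniz_algebra_semidirect: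
  assumes "leibniz_algebra sM brM" "leibniz_algebra sN brN"
    and "leibniz_action sM brM sN brN a1 a2"
  shows "leibniz_algebra (sd_scale sM sN) (sd_bracket brM brN a1 a2)"
proof -
  have vs: "vector_space sM" "vector_space sN"
    and bil: "bilin sM sM sM brM" "bilin sN sN sN brN" "bilin sN sM sM a1" "bilin sM sN sM a2"
    using assms unfolding leibniz_algebra_def leibniz_action_def by auto
  have leibniz: "\<And>x y z. brM x (brM y z) = brM (brM x y) z - brM (brM x z) y"
    "\<And>x y z. brN x (brN y z) = brN (brN x y) z - brN (brN x z) y"
    using assms(1,2) unfolding leibniz_algebra_def by auto
  \<comment> \<open>The six action axioms are exactly the mixed components of the Leibniz identity.\<close>
  have action:
        "\<And>n m m'. a1 n (brM m m') = brM (a1 n m) m' - brM (a1 n m') m"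
        "\<And>m n m'. brM m (a1 n m') = brM (a2 m n) m' - a2 (brM m m') n"
        "\<And>m m' n. brM m (a2 m' n) = a2 (brM m m') n - brM (a2 m n) m'"
        "\<And>m n n'. a2 m (brN n n') = a2 (a2 m n) n' - a2 (a2 m n') n"
        "\<And>n m n'. a1 n (a2 m n') = a2 (a1 n m) n' - a1 (brN n n') m"
        "\<And>n n' m. a1 n (a1 n' m) = a1 (brN n n') m - a2 (a1 n m) n'"
    using assms(3) unfolding leibniz_action_def by auto
  show ?thesis
    unfolding leibniz_algebra_def
    using vector_space_sd_scale[OF vs] bilin_sd_bracket[OF vs bil]
    by (auto simp: sd_bracket_def bilin_simps[OF bil(1)] bilin_simps[OF bil(3)]
        bilin_simps[OF bil(4)] leibniz action algebra_simps)
qed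

lemma leibniz_hom_sd_snd:
  assumes "vector_space sM" "vector_space sN"
  shows "leibniz_hom (sd_scale sM sN) (sd_bracket brM brN a1 a2) sN brN snd"
  using assms unfolding leibniz_hom_def Vector_Spaces.linear_iff
  by (simp add: vector_space_sd_scale sd_scale_def sd_bracket_def)

lemma leibniz_hom_sd_embed:
  assumes "leibniz_algebra sM brM" "leibniz_algebra sN brN"
    and "leibniz_action sM brM sN brN a1 a2"
  shows "leibniz_hom sN brN (sd_scale sM sN) (sd_bracket brM brN a1 a2) (\<lambda>n. (0, n))"
proof -
  interpret M: vector_space sM
    using assms(1) unfolding leibniz_algebra_def by auto
  have "vector_space sN" "bilin sM sM sM brM" "bilin sN sM sM a1" "bilin sM sN sM a2"
    using assms unfolding leibniz_algebra_def leibniz_action_def by auto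
  then show ?thesis
    unfolding leibniz_hom_def Vector_Spaces.linear_iff
    by (simp add: M.vector_space_axioms vector_space_sd_scale sd_scale_def sd_bracket_def
        bilin_simps)
qed

lemma leibniz_hom_sd_target:
  assumes "crossed_module sM brM sN brN a1 a2 d"
  shows "leibniz_hom (sd_scale sM sN) (sd_bracket brM brN a1 a2) sN brN (\<lambda>x. d (fst x) + snd x)"
proof -
  interpret N: vector_space sN
    using assms unfolding crossed_module_def leibniz_algebra_def by auto
  have "vector_space sM" "bilin sN sN sN brN"
    and d: "Vector_Spaces.linear sM sN d" "\<And>m m'. d (brM m m') = brN (d m) (d m')"
    and "\<And>n m. d (a1 n m) = brN n (d m)" "\<And>m n. d (a2 m n) = brN (d m) n"
    using assms unfolding crossed_module_def leibniz_algebra_def leibniz_hom_def by auto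
  then show ?thesis
    unfolding leibniz_hom_def Vector_Spaces.linear_iff
    by (simp add: vector_space_sd_scale sd_scale_def sd_bracket_def linear_simps[OF d(1)]
        bilin_simps N.vector_space_axioms N.scale_right_distrib algebra_simps)
qed

lemma cat_leibniz_semidirect:
  assumes "crossed_module sM brM sN brN a1 a2 d"
  shows "cat_leibniz (sd_scale sM sN) (sd_bracket brM brN a1 a2) sN brN
           snd (\<lambda>x. d (fst x) + snd x) (\<lambda>n. (0, n)) (\<lambda>(x, y). (fst x + fst y, snd x))"
proof -
  have LM: "leibniz_algebra sM brM" and LN: "leibniz_algebra sN brN"
    and act: "leibniz_action sM brM sN brN a1 a2" and d: "Vector_Spaces.linear sM sN d"
    and peiffer: "\<And>m m'. a1 (d m) m' = brM m m'" "\<And>m m'. a2 m (d m') = brM m m'"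
    using assms unfolding crossed_module_def leibniz_hom_def by auto
  have vs: "vector_space sM" "vector_space sN"
    and bil: "bilin sM sM sM brM" "bilin sN sM sM a1" "bilin sM sN sM a2"
    using LM LN act unfolding leibniz_algebra_def leibniz_action_def by auto
  interpret M: vector_space sM by (fact vs)
  show ?thesis
    unfolding cat_leibniz_def
    using leibniz_algebra_semidirect[OF LM LN act] LN leibniz_hom_sd_snd[OF vs]
      leibniz_hom_sd_target[OF assms] leibniz_hom_sd_embed[OF LM LN act]
    by (auto simp: sd_bracket_def sd_scale_def linear_simps[OF d] bilin_simps[OF bil(1)]
        bilin_simps[OF bil(2)] bilin_simps[OF bil(3)] peiffer M.scale_right_distrib
        algebra_simps)
qed

lemma braiding_sd_bracket_fst:
  assumes "braiding sM brM sN brN a1 a2 d B A"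
  shows "fst (sd_bracket brM brN a1 a2 x y) =
           B (d (fst x) + snd x) (d (fst y) + snd y) - B (snd x) (snd y)"
    and "fst (sd_bracket brM brN a1 a2 x y) =
           A (d (fst x) + snd x) (d (fst y) + snd y) - A (snd x) (snd y)"
proof -
  have bil: "bilin sN sN sM B" "bilin sN sN sM A"
    and "\<And>m m'. B (d m) (d m') = brM m m'" "\<And>m m'. A (d m) (d m') = brM m m'"
    and "\<And>m n. B (d m) n = a2 m n" "\<And>m n. A (d m) n = a2 m n"
    and "\<And>m n. B n (d m) = a1 n m" "\<And>m n. A n (d m) = a1 n m"
    using assms unfolding braiding_def by auto
  then show "fst (sd_bracket brM brN a1 a2 x y) =
               B (d (fst x) + snd x) (d (fst y) + snd y) - B (snd x) (snd y)"
    and "fst (sd_bracket brM brN a1 a2 x y) =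
           A (d (fst x) + snd x) (d (fst y) + snd y) - A (snd x) (snd y)"
    unfolding sd_bracket_def bilin_simps[OF bil(1)] bilin_simps[OF bil(2)]
    by (simp_all add: algebra_simps)
qed

definition sd_braid :: "('k::field \<Rightarrow> 'm \<Rightarrow> 'm) \<Rightarrow> ('n \<Rightarrow> 'n \<Rightarrow> 'n) \<Rightarrow> ('n \<Rightarrow> 'n \<Rightarrow> 'm) \<Rightarrow>
    'n \<Rightarrow> 'n \<Rightarrow> 'm \<times> 'n" where
  "sd_braid sM brN B n n' = (sM (-2) (B n n'), brN n n')"

lemma bilin_sd_braid:
  assumes "vector_space sM" "vector_space sN" "bilin sN sN sM B" "bilin sN sN sN brN"
  shows "bilin sN sN (sd_scale sM sN) (sd_braid sM brN B)"
proof -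
  interpret M: vector_space sM by fact
  show ?thesis
    using assms
    by (intro bilinI vector_space_sd_scale)
      (simp_all add: sd_braid_def sd_scale_def bilin_simps M.scale_right_distrib
        M.scale_left_commute)
qed

lemma snd_sd_braid: "snd (sd_braid sM brN B n n') = brN n n'"
  by (simp add: sd_braid_def)

lemma snd_sd_bracket: "snd (sd_bracket brM brN a1 a2 x y) = brN (snd x) (snd y)"
  by (simp add: sd_bracket_def)

lemma sd_braid_target:
  assumes "vector_space sN" "Vector_Spaces.linear sM sN d" "\<And>a b. d (B a b) = brN a b"
  shows "d (fst (sd_braid sM brN B a b)) + snd (sd_braid sM brN B a b) = - brN a b"
  using assms by (simp add: sd_braid_def linear_simps vector_space_scale_minus_two)

lemma sd_braid_naturality:
  assumes "vector_space sM"
    and "\<And>x y. fst (sd_bracket brM brN a1 a2 x y) =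
                  B (d (fst x) + snd x) (d (fst y) + snd y) - B (snd x) (snd y)"
  shows "fst (sd_bracket brM brN a1 a2 x y) +
           fst (sd_braid sM brN B (d (fst x) + snd x) (d (fst y) + snd y)) =
         fst (sd_braid sM brN B (snd x) (snd y)) - fst (sd_bracket brM brN a1 a2 x y)"
  using assms by (simp add: sd_braid_def vector_space_scale_minus_two algebra_simps)

lemma sd_braid_hexagon:
  assumes "vector_space sM" "leibniz_algebra sN brN"
    and "\<And>a b c. B1 a (brN b c) = B2 (brN a b) c - B3 (brN a c) b"
  shows "sd_braid sM brN B1 a (brN b c) =
           sd_braid sM brN B2 (brN a b) c - sd_braid sM brN B3 (brN a c) b"
proof -
  interpret M: vector_space sM by fact
  show ?thesis
    using assms unfolding leibniz_algebra_def
    by (simp add: sd_braid_def M.scale_right_diff_distrib)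
qed

theorem mainTheorem2:
  fixes sM :: "'k::field \<Rightarrow> 'm::ab_group_add \<Rightarrow> 'm" and brM :: "'m \<Rightarrow> 'm \<Rightarrow> 'm"
    and sN :: "'k \<Rightarrow> 'n::ab_group_add \<Rightarrow> 'n" and brN :: "'n \<Rightarrow> 'n \<Rightarrow> 'n"
    and a1 :: "'n \<Rightarrow> 'm \<Rightarrow> 'm" and a2 :: "'m \<Rightarrow> 'n \<Rightarrow> 'm" and d :: "'m \<Rightarrow> 'n"
    and B :: "'n \<Rightarrow> 'n \<Rightarrow> 'm" and A :: "'n \<Rightarrow> 'n \<Rightarrow> 'm"
  assumes "(2::'k) \<noteq> 0"
    and "braided_crossed_module sM brM sN brN a1 a2 d B A"
  shows "braided_cat_leibniz (sd_scale sM sN) (sd_bracket brM brN a1 a2) sN brN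
           (\<lambda>x. snd x) (\<lambda>x. d (fst x) + snd x) (\<lambda>n. (0, n))
           (\<lambda>(x, y). (fst x + fst y, snd x))
           (\<lambda>n n'. (sM (-2) (B n n'), brN n n'))
           (\<lambda>n n'. (sM (-2) (A n n'), brN n n'))"
proof -
  have cm: "crossed_module sM brM sN brN a1 a2 d" and br: "braiding sM brM sN brN a1 a2 d B A"
    using assms(2) unfolding braided_crossed_module_def by auto
  have LN: "leibniz_algebra sN brN" and vs: "vector_space sM" "vector_space sN"
    and bN: "bilin sN sN sN brN" and d: "Vector_Spaces.linear sM sN d"
    using cm unfolding crossed_module_def leibniz_algebra_def leibniz_hom_def by auto
  have bil: "bilin sN sN sM B" "bilin sN sN sM A"
    and dB: "\<And>n n'. d (B n n') = brN n n'" "\<And>n n'. d (A n n') = brN n n'"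
    and hexagon: "\<And>n n' n''. B n (brN n' n'') = B (brN n n') n'' - B (brN n n'') n'"
      "\<And>n n' n''. A n (brN n' n'') = B (brN n n') n'' - A (brN n n'') n'"
      "\<And>n n' n''. B n (brN n' n'') = B (brN n n') n'' - A (brN n n'') n'"
      "\<And>n n' n''. A n (brN n' n'') = A (brN n n') n'' - A (brN n n'') n'"
    using br unfolding braiding_def by auto
  show ?thesis
    unfolding braided_cat_leibniz_def sd_braid_def[symmetric]
    using cat_leibniz_semidirect[OF cm] bilin_sd_braid[OF vs bil(1) bN]
      bilin_sd_braid[OF vs bil(2) bN]
      sd_braid_target[of sN sM d B brN, OF vs(2) d dB(1)]
      sd_braid_target[of sN sM d A brN, OF vs(2) d dB(2)]
      sd_braid_naturality[OF vs(1) braiding_sd_bracket_fst(1)[OF br]]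
      sd_braid_naturality[OF vs(1) braiding_sd_bracket_fst(2)[OF br]]
      sd_braid_hexagon[of sM sN brN B B B, OF vs(1) LN hexagon(1)]
      sd_braid_hexagon[of sM sN brN A B A, OF vs(1) LN hexagon(2)]
      sd_braid_hexagon[of sM sN brN B B A, OF vs(1) LN hexagon(3)]
      sd_braid_hexagon[of sM sN brN A A A, OF vs(1) LN hexagon(4)]
    by (simp add: snd_sd_braid snd_sd_bracket)
qed

end
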